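(* For every simple transitive type $T$, $I\ \llbracket T\cdot T\to T\rrbracket_e\ I$; that is, whenever $x\,\llbracket T\rrbracket_e\,y$ and $y\,\llbracket T\rrbracket_e\,z$, also $x\,\llbracket T\rrbracket_e\,z$.
   Context: Terms are those of the pure untyped $\lambda$-calculus, up to $\alpha$-equivalence; $=_{\beta\eta}$ is $\beta\eta$-convertibility; $I:=\lambda x.x$. Relational types: $R ::= X \mid R\to R' \mid \forall X.R \mid R^{\cup} \mid R\cdot R' \mid t$ (last form: promotion of a term). A relation on terms is $\beta\eta$-closed if closed under replacing either related term by a $\beta\eta$-equal one; $\mathcal{R}$ is the set of such relations; environments map type variables to $\mathcal{R}$. Interpretation: $\llbracket X\rrbracket_\gamma=\gamma(X)$; $t\,\llbracket R\to R'\rrbracket_\gamma\,t'$ iff for all $a,a'$ with $a\,\llbracket R\rrbracket_\gamma\,a'$, $t\,a\,\llbracket R'\rrbracket_\gamma\,t'\,a'$; $\llbracket \forall X.R\rrbracket_\gamma=\bigcap_{r\in\mathcal{R}}\llbracket R\rrbracket_{\gamma[X\mapsto r]}$; $t\,\llbracket R^\cup\rrbracket_\gamma\,t'$ iff $t'\,\llbracket R\rrbracket_\gamma\,t$; $t\,\llbracket R\cdot R'\rrbracket_\gamma\,t'$ iff $\exists t''$, $t\,\llbracket R\rrbracket_\gamma\,t''$ and $t''\,\llbracket R'\rrbracket_\gamma\,t'$; $\llbracket \hat t\rrbracket_\gamma=\{(t,t')\mid \hat t\,t=_{\beta\eta}t'\}$. $e$ maps every type variable to $=_{\beta\eta}$.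 Polarities $p\in\{+,-\}$, $\bar p$ the other; $\forall^p$: type variables are $\forall^p$; if $R$ is $\forall^{\bar p}$ and $R'$ is $\forall^p$ then $R\to R'$ is $\forall^p$; if $R$ is $\forall^+$ then $\forall X.R$ is $\forall^+$; if $R$ is $\forall^p$ then so is $R^\cup$; a promotion of $t=_{\beta\eta}I$ is $\forall^p$. $P$ ranges over $\forall^+$ types, $N$ over $\forall^-$ types. Write $t\bullet R:=t\cdot R\cdot t^\cup$. Simple transitive types: $T ::= P \mid P\to T \mid N\to T \mid t\bullet T$ ($t$ any term). *)

theory Defs
  imports Main
begin

datatype dB = Var nat | App dB dB | Abs dB

primrec lift :: "dB \<Rightarrow> nat \<Rightarrow> dB" where
  "lift (Var i) k = (if i < k then Var i else Var (Suc i))"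
| "lift (App s t) k = App (lift s k) (lift t k)"
| "lift (Abs s) k = Abs (lift s (Suc k))"

primrec subst :: "dB \<Rightarrow> dB \<Rightarrow> nat \<Rightarrow> dB" where
  "subst (Var i) s k = (if k < i then Var (i - 1) else if i = k then s else Var i)"
| "subst (App t u) s k = App (subst t s k) (subst u s k)"
| "subst (Abs t) s k = Abs (subst t (lift s 0) (Suc k))"

inductive bestep :: "dB \<Rightarrow> dB \<Rightarrow> bool" where
  beta: "bestep (App (Abs s) t) (subst s t 0)"
| eta:  "bestep (Abs (App (lift s 0) (Var 0))) s"
| appL: "bestep s t \<Longrightarrow> bestep (App s u) (App t u)"
| appR: "bestep s t \<Longrightarrow> bestep (App u s) (App u t)"
| abs:  "bestep s t \<Longrightarrow> bestep (Abs s) (Abs t)"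

definition beconv :: "dB \<Rightarrow> dB \<Rightarrow> bool" where
  "beconv = (\<lambda>s t. bestep s t \<or> bestep t s)\<^sup>*\<^sup>*"

definition Id_tm :: dB where "Id_tm = Abs (Var 0)"

datatype rty =
    TVar nat
  | Arr rty rty
  | All nat rty
  | Cnv rty
  | Comp rty rty
  | Prom dB

type_synonym trel = "dB \<Rightarrow> dB \<Rightarrow> bool"

definition be_closed :: "trel \<Rightarrow> bool" where
  "be_closed r \<longleftrightarrow> (\<forall>t t' u. r t t' \<and> beconv t u \<longrightarrow> r u t')
                   \<and> (\<forall>t t' u. r t t' \<and> beconv t' u \<longrightarrow> r t u)"

fun interp :: "(nat \<Rightarrow> trel) \<Rightarrow> rty \<Rightarrow> trel" where
  "interp \<gamma> (TVar X) = \<gamma> X"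
| "interp \<gamma> (Arr R R') = (\<lambda>t t'. \<forall>a a'. interp \<gamma> R a a' \<longrightarrow> interp \<gamma> R' (App t a) (App t' a'))"
| "interp \<gamma> (All X R) = (\<lambda>t t'. \<forall>r. be_closed r \<longrightarrow> interp (\<gamma>(X := r)) R t t')"
| "interp \<gamma> (Cnv R) = (\<lambda>t t'. interp \<gamma> R t' t)"
| "interp \<gamma> (Comp R R') = (\<lambda>t t'. \<exists>t''. interp \<gamma> R t t'' \<and> interp \<gamma> R' t'' t')"
| "interp \<gamma> (Prom s) = (\<lambda>t t'. beconv (App s t) t')"

definition env_e :: "nat \<Rightarrow> trel" where "env_e = (\<lambda>X. beconv)"

text \<open>forall-polarity: True = +, False = -.\<close>
inductive forallp :: "bool \<Rightarrow> rty \<Rightarrow> bool" where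
  var:  "forallp p (TVar X)"
| arr:  "forallp (\<not> p) R \<Longrightarrow> forallp p R' \<Longrightarrow> forallp p (Arr R R')"
| all:  "forallp True R \<Longrightarrow> forallp True (All X R)"
| cnv:  "forallp p R \<Longrightarrow> forallp p (Cnv R)"
| prom: "beconv t Id_tm \<Longrightarrow> forallp p (Prom t)"

definition bullet :: "dB \<Rightarrow> rty \<Rightarrow> rty" where
  "bullet t R = Comp (Comp (Prom t) R) (Cnv (Prom t))"

inductive simple_trans :: "rty \<Rightarrow> bool" where
  pos:    "forallp True P \<Longrightarrow> simple_trans P"
| arrP:   "forallp True P \<Longrightarrow> simple_trans T \<Longrightarrow> simple_trans (Arr P T)"
| arrN:   "forallp False N \<Longrightarrow> simple_trans T \<Longrightarrow> simple_trans (Arr N T)"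
| bullet: "simple_trans T \<Longrightarrow> simple_trans (bullet t T)"

end

theory Submission
  imports Defs
begin

text \<open>
  Under the environment \<open>e\<close>, the interpretation of a \<open>\<forall>\<^sup>+\<close> type is contained in
  \<open>=\<^sub>\<beta>\<^sub>\<eta>\<close> and that of a \<open>\<forall>\<^sup>-\<close> type contains it: a quantifier may be instantiated
  with \<open>=\<^sub>\<beta>\<^sub>\<eta>\<close> itself, and the arrow case uses \<open>\<eta>\<close>-extensionality. For \<open>P \<rightarrow> T\<close>,
  arguments related by \<open>P\<close> are \<open>\<beta>\<eta>\<close>-equal, so the middle step may reuse the right
  argument; for \<open>N \<rightarrow> T\<close>, the left argument is related to itself by \<open>N\<close>; and
  \<open>t \<bullet> T\<close> relates \<open>u\<close> and \<open>v\<close> exactly when \<open>T\<close> relates \<open>t u\<close> and \<open>t v\<close>, because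
  all interpretations are \<open>\<beta>\<eta>\<close>-closed.
\<close>

lemma subst_Var: "subst (Var i) s k = (if k < i then Var (i - 1) else if i = k then s else Var i)"
  by simp

declare subst.simps(1)[simp del]

lemma lift_lift:
  "i < k + 1 \<Longrightarrow> lift (lift t i) (Suc k) = lift (lift t k) i"
  by (induct t arbitrary: i k) auto

lemma lift_subst:
  "j < i + 1 \<Longrightarrow> lift (subst t s j) i = subst (lift t (i + 1)) (lift s i) j"
  by (induct t arbitrary: i j s) (simp_all add: diff_Suc subst_Var lift_lift split: nat.split)

lemma lift_subst_lt:
  "i < j + 1 \<Longrightarrow> lift (subst t s j) i = subst (lift t i) (lift s i) (j + 1)"
  by (induct t arbitrary: i j s) (auto simp add: subst_Var lift_lift)

lemma subst_lift [simp]: "subst (lift t k) s k = t"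
  by (induct t arbitrary: k s) (simp_all add: subst_Var)

lemma subst_subst:
  "i < j + 1 \<Longrightarrow> subst (subst t (lift v i) (Suc j)) (subst u v j) i = subst (subst t u i) v j"
  by (induct t arbitrary: i j u v)
    (simp_all add: diff_Suc subst_Var lift_lift [symmetric] lift_subst_lt split: nat.split)

primrec var_bound :: "dB \<Rightarrow> nat" where
  "var_bound (Var i) = Suc i"
| "var_bound (App s t) = max (var_bound s) (var_bound t)"
| "var_bound (Abs s) = var_bound s - 1"

lemma var_bound_lift: "var_bound (lift s j) \<le> Suc (var_bound s)"
proof (induct s arbitrary: j)
  case (App s t)
  then show ?case by (metis lift.simps(2) var_bound.simps(2) max.mono max_Suc_Suc)
next
  case (Abs s)
  have "var_bound (lift s (Suc j)) \<le> Suc (var_bound s)"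
    by (rule Abs)
  then show ?case by simp
qed simp

lemma subst_beyond_var_bound: "var_bound s \<le> k \<Longrightarrow> subst s u k = s"
  by (induct s arbitrary: k u) (auto simp: subst_Var)

lemma bestep_lift: "bestep s t \<Longrightarrow> bestep (lift s k) (lift t k)"
proof (induct arbitrary: k rule: bestep.induct)
  case (beta s t)
  then show ?case using bestep.beta[of "lift s (Suc k)" "lift t k"] by (simp add: lift_subst)
next
  case (eta s)
  then show ?case using bestep.eta[of "lift s k"] by (simp add: lift_lift)
qed (auto intro: bestep.intros)

lemma bestep_subst: "bestep s t \<Longrightarrow> bestep (subst s u k) (subst t u k)"
proof (induct arbitrary: k u rule: bestep.induct)
  case (beta s t)
  then show ?case using bestep.beta[of "subst s (lift u 0) (Suc k)" "subst t u k"]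
    by (simp add: subst_subst[of 0 k, simplified])
next
  case (eta s)
  then show ?case using bestep.eta[of "subst s u k"]
    by (simp add: lift_subst_lt[of 0 k, simplified] subst_Var)
qed (auto intro: bestep.intros)

lemma beconv_refl [simp]: "beconv s s"
  by (simp add: beconv_def)

lemma beconv_sym: "beconv s t \<Longrightarrow> beconv t s"
  unfolding beconv_def
  by (induct rule: rtranclp_induct) (auto intro: converse_rtranclp_into_rtranclp)

lemma beconv_trans: "beconv s t \<Longrightarrow> beconv t u \<Longrightarrow> beconv s u"
  unfolding beconv_def by (rule rtranclp_trans)

lemma beconv_step: "bestep s t \<Longrightarrow> beconv s t"
  unfolding beconv_def by auto

lemma beconv_map:
  assumes "\<And>s t. bestep s t \<Longrightarrow> bestep (f s) (f t)"
  shows "beconv s t \<Longrightarrow> beconv (f s) (f t)"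
  unfolding beconv_def
proof (induct rule: rtranclp_induct)
  case (step y z)
  then show ?case using assms by (auto intro: rtranclp.rtrancl_into_rtrancl[where b="f y"])
qed simp

lemma beconv_App: "beconv s t \<Longrightarrow> beconv u v \<Longrightarrow> beconv (App s u) (App t v)"
proof -
  assume "beconv s t" "beconv u v"
  then have "beconv (App s u) (App t u)" "beconv (App t u) (App t v)"
    by (auto intro: beconv_map bestep.intros)
  then show ?thesis by (rule beconv_trans)
qed

lemma beconv_App_Id: "beconv (App Id_tm x) x"
  using beconv_step[OF bestep.beta[of "Var 0" x]] by (simp add: Id_tm_def subst_Var)

lemma beconv_Abs: "beconv s t \<Longrightarrow> beconv (Abs s) (Abs t)"
  by (rule beconv_map) (rule bestep.abs)

lemma beconv_lift: "beconv s t \<Longrightarrow> beconv (lift s k) (lift t k)"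
  by (rule beconv_map) (rule bestep_lift)

lemma beconv_subst: "beconv s t \<Longrightarrow> beconv (subst s u k) (subst t u k)"
  by (rule beconv_map) (rule bestep_subst)

lemma beconv_eta_ext:
  assumes "\<And>a. beconv (App t a) (App t' a)"
  shows "beconv t t'"
proof -
  define n where "n = max (var_bound t) (var_bound t')"
  \<comment> \<open>\<open>Var n\<close> is fresh for \<open>t\<close> and \<open>t'\<close>; renaming it to a new bound variable yields their \<open>\<eta>\<close>-expansions\<close>
  have fresh: "subst (lift s 0) (Var 0) (Suc n) = lift s 0" if "var_bound s \<le> n" for s
    using that var_bound_lift[of s 0] by (simp add: subst_beyond_var_bound)
  have "beconv (subst (lift (App t (Var n)) 0) (Var 0) (Suc n))
               (subst (lift (App t' (Var n)) 0) (Var 0) (Suc n))"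
    by (intro beconv_subst beconv_lift assms)
  then have "beconv (App (lift t 0) (Var 0)) (App (lift t' 0) (Var 0))"
    using fresh[of t] fresh[of t'] by (simp add: subst_Var n_def)
  then have "beconv (Abs (App (lift t 0) (Var 0))) (Abs (App (lift t' 0) (Var 0)))"
    by (rule beconv_Abs)
  then show ?thesis
    by (meson beconv_step beconv_sym beconv_trans bestep.eta)
qed

lemma be_closedI:
  "(\<And>t t' u u'. r t t' \<Longrightarrow> beconv t u \<Longrightarrow> beconv t' u' \<Longrightarrow> r u u') \<Longrightarrow> be_closed r"
  unfolding be_closed_def by (metis beconv_refl)

lemma be_closedD: "be_closed r \<Longrightarrow> r t t' \<Longrightarrow> beconv t u \<Longrightarrow> beconv t' u' \<Longrightarrow> r u u'"
  unfolding be_closed_def by blast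

lemma be_closed_beconv: "be_closed beconv"
  by (rule be_closedI) (meson beconv_sym beconv_trans)

lemma be_closed_interp: "(\<And>X. be_closed (\<gamma> X)) \<Longrightarrow> be_closed (interp \<gamma> R)"
proof (induct R arbitrary: \<gamma>)
  case (TVar X)
  then show ?case by simp
next
  case (Arr R R')
  then show ?case
    by (intro be_closedI) (simp, meson beconv_App beconv_refl be_closedD)
next
  case (All X R)
  then have "be_closed (interp (\<gamma>(X := r)) R)" if "be_closed r" for r
    using that by simp
  then show ?case
    by (intro be_closedI) (auto intro: be_closedD)
next
  case (Cnv R)
  then show ?case
    by (intro be_closedI) (simp, meson be_closedD)
next
  case (Comp R R')
  then show ?case
    by (intro be_closedI) (simp, meson be_closedD beconv_refl)
next
  case (Prom s)
  show ?case
    by (intro be_closedI) (simp, meson beconv_App beconv_refl beconv_sym beconv_trans)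
qed

lemma be_closed_env_e: "be_closed (env_e X)"
  by (simp add: env_e_def be_closed_beconv)

lemma be_closed_interp_e: "be_closed (interp env_e R)"
  by (rule be_closed_interp) (rule be_closed_env_e)

lemma interp_Prom_Id: "beconv t Id_tm \<Longrightarrow> interp \<gamma> (Prom t) = beconv"
  by (intro ext) (simp, meson beconv_App beconv_App_Id beconv_refl beconv_sym beconv_trans)

lemma interp_bullet:
  assumes "\<And>X. be_closed (\<gamma> X)"
  shows "interp \<gamma> (bullet t R) u v \<longleftrightarrow> interp \<gamma> R (App t u) (App t v)"
proof
  assume "interp \<gamma> (bullet t R) u v"
  then obtain m n where "beconv (App t u) m" "interp \<gamma> R m n" "beconv (App t v) n"
    by (auto simp: bullet_def)
  then show "interp \<gamma> R (App t u) (App t v)"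
    using be_closed_interp[OF assms] by (meson be_closedD beconv_sym)
next
  assume "interp \<gamma> R (App t u) (App t v)"
  then show "interp \<gamma> (bullet t R) u v"
    unfolding bullet_def by (auto intro: beconv_refl)
qed

lemma interp_Arr_Id_Id:
  assumes "\<And>X. be_closed (\<gamma> X)"
  shows "interp \<gamma> (Arr R R') Id_tm Id_tm \<longleftrightarrow> interp \<gamma> R \<le> interp \<gamma> R'"
proof -
  have "interp \<gamma> R' (App Id_tm a) (App Id_tm a') \<longleftrightarrow> interp \<gamma> R' a a'" for a a'
    using be_closed_interp[OF assms] by (meson be_closedD beconv_App_Id beconv_sym)
  then show ?thesis
    by auto
qed

lemma interp_e_polarity:
  "forallp p R \<Longrightarrow> (if p then interp env_e R \<le> beconv else beconv \<le> interp env_e R)"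
proof (induct rule: forallp.induct)
  case (var p X)
  then show ?case by (simp add: env_e_def)
next
  case (arr p R R')
  show ?case
  proof (cases p)
    case True
    with arr have dom: "beconv \<le> interp env_e R" and cod: "interp env_e R' \<le> beconv"
      by simp_all
    have "beconv x y" if h: "interp env_e (Arr R R') x y" for x y
    proof (rule beconv_eta_ext)
      fix a
      have "interp env_e R a a"
        using dom by (rule predicate2D) simp
      with h show "beconv (App x a) (App y a)"
        using cod by auto
    qed
    with True show ?thesis by auto
  next
    case False
    with arr have dom: "interp env_e R \<le> beconv" and cod: "beconv \<le> interp env_e R'"
      by simp_all
    have "interp env_e (Arr R R') x y" if "beconv x y" for x y
      using that dom cod by (auto intro: beconv_App)
    with False show ?thesis by auto
  qed
next
  case (all R X)
  have "env_e(X := beconv) = env_e"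
    by (auto simp: env_e_def)
  then have "interp env_e R x y" if "interp env_e (All X R) x y" for x y
    using that be_closed_beconv by (metis interp.simps(3))
  with all show ?case by auto
next
  case (cnv p R)
  have "interp env_e (Cnv R) = (interp env_e R)\<inverse>\<inverse>" "beconv\<inverse>\<inverse> = beconv"
    by (auto simp: fun_eq_iff intro: beconv_sym)
  with cnv(2) show ?case
    by (metis conversep_mono)
next
  case (prom t p)
  then have "interp env_e (Prom t) = beconv"
    by (rule interp_Prom_Id)
  then show ?case
    by (simp del: interp.simps)
qed

lemma forallp_pos_interp_e_le: "forallp True P \<Longrightarrow> interp env_e P \<le> beconv"
  using interp_e_polarity by fastforce

lemma forallp_neg_interp_e_ge: "forallp False N \<Longrightarrow> beconv \<le> interp env_e N"
  using interp_e_polarity by fastforce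

lemma simple_trans_interp_e_transp: "simple_trans T \<Longrightarrow> transp (interp env_e T)"
proof (induct rule: simple_trans.induct)
  case (pos P)
  show ?case
  proof (rule transpI)
    fix x y z
    assume xy: "interp env_e P x y" and yz: "interp env_e P y z"
    from xy have "beconv y x"
      using forallp_pos_interp_e_le[OF pos] by (auto intro: beconv_sym)
    with yz show "interp env_e P x z"
      by (rule be_closedD[OF be_closed_interp_e]) (rule beconv_refl)
  qed
next
  case (arrP P T)
  show ?case
  proof (rule transpI, unfold interp.simps, intro allI impI)
    fix x y z a a'
    assume xy: "\<forall>a a'. interp env_e P a a' \<longrightarrow> interp env_e T (App x a) (App y a')"
      and yz: "\<forall>a a'. interp env_e P a a' \<longrightarrow> interp env_e T (App y a) (App z a')"
      and aa': "interp env_e P a a'"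
    from aa' have "beconv a a'"
      using forallp_pos_interp_e_le[OF arrP(1)] by auto
    with aa' have "interp env_e P a' a'"
      by (rule be_closedD[OF be_closed_interp_e]) (rule beconv_refl)
    with xy yz aa' show "interp env_e T (App x a) (App z a')"
      using arrP(3) by (meson transpD)
  qed
next
  case (arrN N T)
  show ?case
  proof (rule transpI, unfold interp.simps, intro allI impI)
    fix x y z a a'
    assume xy: "\<forall>a a'. interp env_e N a a' \<longrightarrow> interp env_e T (App x a) (App y a')"
      and yz: "\<forall>a a'. interp env_e N a a' \<longrightarrow> interp env_e T (App y a) (App z a')"
      and aa': "interp env_e N a a'"
    have "interp env_e N a a"
      using forallp_neg_interp_e_ge[OF arrN(1)] by (rule predicate2D) (rule beconv_refl)
    with xy yz aa' show "interp env_e T (App x a) (App z a')"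
      using arrN(3) by (meson transpD)
  qed
next
  case (bullet T t)
  then show ?case
    by (intro transpI) (auto simp: interp_bullet be_closed_env_e dest: transpD)
qed

theorem mainTheorem13:
  assumes "simple_trans T"
  shows "interp env_e (Arr (Comp T T) T) Id_tm Id_tm"
proof -
  have "interp env_e (Comp T T) = interp env_e T OO interp env_e T"
    by auto
  also have "\<dots> \<le> interp env_e T"
    using simple_trans_interp_e_transp[OF assms] by (rule transp_relcompp_less_eq)
  finally show ?thesis
    by (simp only: interp_Arr_Id_Id be_closed_env_e)
qed

end
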